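(* Up to multiplication by a positive integer, every basic weight of a basic system of type $D$ is one of the following (coordinates $\lambda_k=\langle\lambda,e_k\rangle$): (1) $(D_4,2,2)$: $(1,0,1,0)$, $(0,-1,1,0)$; (2) $(D_5,3,3)$: $(1,0,-1,1,0)$.
   Context: $D_n$ ($n\ge4$) is realized in $\mathbb R^n$ with orthonormal basis $e_1,\dots,e_n$ and standard inner product, simple roots $\alpha_k=e_k-e_{k+1}$ ($k<n$), $\alpha_n=e_{n-1}+e_n$. Let $W$ be the Weyl group, $\alpha^\vee=2\alpha/\langle\alpha,\alpha\rangle$. A weight is integral if $\langle\lambda,\alpha^\vee\rangle\in\mathbb Z$ for all roots $\alpha$; $\overline\lambda$ is the dominant weight in $W\lambda$. For $I=\Delta\setminus\{\alpha_i\}$, $J=\Delta\setminus\{\alpha_j\}$, a basic weight of $(\Phi,i,j)$ is an integral $\lambda$ with $\langle\lambda,\alpha^\vee\rangle\in\mathbb Z_{>0}$ for all $\alpha\in I$ and $\{\alpha\in\Delta:\langle\overline\lambda,\alpha\rangle=0\}=J$; $(\Phi,i,j)$ is a basic system if it has a basic weight. *)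

theory Defs imports Complex_Main begin

text \<open>Root system D_n realised in R^n; vectors are functions nat => real,
  only coordinates 1..n are relevant.\<close>

definition ev :: "nat \<Rightarrow> nat \<Rightarrow> real" where
  "ev k = (\<lambda>t. if t = k then 1 else 0)"

definition ip :: "nat \<Rightarrow> (nat \<Rightarrow> real) \<Rightarrow> (nat \<Rightarrow> real) \<Rightarrow> real" where
  "ip n x y = (\<Sum>k=1..n. x k * y k)"

definition rootsD :: "nat \<Rightarrow> (nat \<Rightarrow> real) set" where
  "rootsD n = {(\<lambda>t. s * ev k t + r * ev l t) | k l s r.
      1 \<le> k \<and> k < l \<and> l \<le> n \<and> s \<in> {1, -1} \<and> r \<in> {1, -1}}"

definition simple_root :: "nat \<Rightarrow> nat \<Rightarrow> nat \<Rightarrow> real" where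
  "simple_root n k = (if k < n then (\<lambda>t. ev k t - ev (k+1) t)
                      else (\<lambda>t. ev (n-1) t + ev n t))"

definition coroot :: "nat \<Rightarrow> (nat \<Rightarrow> real) \<Rightarrow> nat \<Rightarrow> real" where
  "coroot n a = (\<lambda>t. (2 / ip n a a) * a t)"

definition refl :: "nat \<Rightarrow> (nat \<Rightarrow> real) \<Rightarrow> (nat \<Rightarrow> real) \<Rightarrow> nat \<Rightarrow> real" where
  "refl n a x = (\<lambda>t. x t - ip n x (coroot n a) * a t)"

inductive_set weylD :: "nat \<Rightarrow> ((nat \<Rightarrow> real) \<Rightarrow> (nat \<Rightarrow> real)) set" for n where
  weyl_id: "id \<in> weylD n"
| weyl_step: "w \<in> weylD n \<Longrightarrow> a \<in> rootsD n \<Longrightarrow> refl n a \<circ> w \<in> weylD n"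

definition dominant :: "nat \<Rightarrow> (nat \<Rightarrow> real) \<Rightarrow> bool" where
  "dominant n x \<longleftrightarrow> (\<forall>k\<in>{1..n}. ip n x (simple_root n k) \<ge> 0)"

definition dom_conj :: "nat \<Rightarrow> (nat \<Rightarrow> real) \<Rightarrow> nat \<Rightarrow> real" where
  "dom_conj n x = (THE y. y \<in> (\<lambda>w. w x) ` weylD n \<and> dominant n y)"

definition integral_weight :: "nat \<Rightarrow> (nat \<Rightarrow> real) \<Rightarrow> bool" where
  "integral_weight n x \<longleftrightarrow> (\<forall>a\<in>rootsD n. ip n x (coroot n a) \<in> \<int>)"

text \<open>Simple roots indexed by 1..n; I = Delta - {alpha_i}, J = Delta - {alpha_j}.\<close>
definition basic_weight :: "nat \<Rightarrow> nat \<Rightarrow> nat \<Rightarrow> (nat \<Rightarrow> real) \<Rightarrow> bool" where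
  "basic_weight n i j x \<longleftrightarrow> integral_weight n x
     \<and> (\<forall>k\<in>{1..n} - {i}. ip n x (coroot n (simple_root n k)) \<in> \<int>
                          \<and> ip n x (coroot n (simple_root n k)) > 0)
     \<and> {k\<in>{1..n}. ip n (dom_conj n x) (simple_root n k) = 0} = {1..n} - {j}"

definition basic_system :: "nat \<Rightarrow> nat \<Rightarrow> nat \<Rightarrow> bool" where
  "basic_system n i j \<longleftrightarrow> (\<exists>x. basic_weight n i j x)"

end

theory Submission
  imports Defs "HOL-Combinatorics.Permutations"
begin

text \<open>The Weyl group of \<open>D\<^sub>n\<close> permutes the coordinates and changes an even number of
  their signs, so the multiset of absolute values of the coordinates and their product are
  constant on an orbit. Together with dominance (\<open>y\<^sub>1 \<ge> \<dots> \<ge> y\<^sub>n\<^sub>-\<^sub>1 \<ge> \<bar>y\<^sub>n\<bar>\<close>) they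
  determine the dominant element of the orbit, which exists because a maximiser of
  \<open>\<langle>-, \<rho>\<rangle>\<close> on the finite orbit is dominant.

  For a basic weight \<open>\<lambda>\<close> the dominant conjugate is a positive multiple \<open>c \<omega>\<^sub>j\<close> of a
  fundamental weight, so every coordinate of \<open>\<lambda>\<close> lies in \<open>{0, c, -c}\<close>. Positivity of
  \<open>\<langle>\<lambda>, \<alpha>\<^sub>k\<^sup>\<or>\<rangle>\<close> for \<open>k \<noteq> i\<close> makes the coordinates strictly decrease at every
  \<open>k \<notin> {i, n}\<close> and gives \<open>\<lambda>\<^sub>n\<^sub>-\<^sub>1 + \<lambda>\<^sub>n > 0\<close>. Three values admit no three consecutive strict
  descents, which leaves \<open>n \<in> {4, 5}\<close> and \<open>i = n - 2\<close>; counting the coordinates of absolute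
  value \<open>c\<close> in \<open>\<lambda>\<close> and in \<open>c \<omega>\<^sub>j\<close> then determines \<open>j\<close> and excludes \<open>c (1, -1, 1, 0)\<close>.\<close>

lemma ip_commute: "ip n x y = ip n y x"
  by (simp add: ip_def mult.commute)

lemma ip_diff_scaled: "ip n (\<lambda>t. x t - c * a t) v = ip n x v - c * ip n a v"
  by (simp add: ip_def algebra_simps sum_subtractf sum_distrib_left)

lemma ip_refl: "ip n (refl n a x) v = ip n x v - ip n x (coroot n a) * ip n a v"
  unfolding refl_def by (rule ip_diff_scaled)

lemma ip_root:
  assumes "1 \<le> k" "k < l" "l \<le> n"
  shows "ip n z (\<lambda>t. s * ev k t + r * ev l t) = s * z k + r * z l"
proof -
  have "ip n z (\<lambda>t. s * ev k t + r * ev l t)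
      = (\<Sum>t=1..n. s * (if t = k then z t else 0)) + (\<Sum>t=1..n. r * (if t = l then z t else 0))"
    unfolding ip_def ev_def by (auto simp: sum.distrib[symmetric] algebra_simps intro!: sum.cong)
  also have "\<dots> = s * z k + r * z l"
    using assms by (simp add: sum_distrib_left[symmetric])
  finally show ?thesis .
qed

lemma root_in_rootsD:
  "1 \<le> k \<Longrightarrow> k < l \<Longrightarrow> l \<le> n \<Longrightarrow> s \<in> {1,-1} \<Longrightarrow> r \<in> {1,-1}
    \<Longrightarrow> (\<lambda>t. s * ev k t + r * ev l t) \<in> rootsD n"
  unfolding rootsD_def by blast

lemma coroot_root:
  assumes "a \<in> rootsD n"
  shows "coroot n a = a"
proof -
  obtain k l s r where a: "a = (\<lambda>t. s * ev k t + r * ev l t)" "1 \<le> k" "k < l" "l \<le> n"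
    "s \<in> {1,-1}" "r \<in> {1,-1}"
    using assms unfolding rootsD_def by blast
  have "ip n a a = 2"
    using ip_root[OF a(2-4), of a s r] a by (auto simp: ev_def)
  then show ?thesis
    by (simp add: coroot_def)
qed

lemma simple_root_in_rootsD:
  assumes "n \<ge> 2" "k \<in> {1..n}"
  shows "simple_root n k \<in> rootsD n"
proof (cases "k < n")
  case True
  then have "simple_root n k = (\<lambda>t. 1 * ev k t + (-1) * ev (k+1) t)"
    by (simp add: simple_root_def fun_eq_iff)
  moreover have "(\<lambda>t. 1 * ev k t + (-1) * ev (k+1) t) \<in> rootsD n"
    using True assms by (intro root_in_rootsD) auto
  ultimately show ?thesis
    by simp
next
  case False
  then have "simple_root n k = (\<lambda>t. 1 * ev (n-1) t + 1 * ev n t)"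
    by (simp add: simple_root_def fun_eq_iff)
  moreover have "(\<lambda>t. 1 * ev (n-1) t + 1 * ev n t) \<in> rootsD n"
    using assms by (intro root_in_rootsD) auto
  ultimately show ?thesis
    by simp
qed

lemma coroot_simple_root: "n \<ge> 2 \<Longrightarrow> k \<in> {1..n} \<Longrightarrow> coroot n (simple_root n k) = simple_root n k"
  by (intro coroot_root simple_root_in_rootsD)

lemma ip_simple_root:
  "1 \<le> k \<Longrightarrow> k < n \<Longrightarrow> ip n z (simple_root n k) = z k - z (Suc k)"
  using ip_root[of k "k+1" n z 1 "-1"] by (simp add: simple_root_def)

lemma ip_simple_root_last:
  "n \<ge> 2 \<Longrightarrow> ip n z (simple_root n n) = z (n-1) + z n"
  using ip_root[of "n-1" n n z 1 1] by (simp add: simple_root_def)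

definition rho :: "nat \<Rightarrow> nat \<Rightarrow> real" where
  "rho n = (\<lambda>t. real n - real t)"

lemma ip_simple_root_rho:
  assumes "n \<ge> 2" "k \<in> {1..n}"
  shows "ip n (simple_root n k) (rho n) = 1"
  using assms ip_commute[of n "simple_root n k"]
  by (cases "k < n") (auto simp: ip_simple_root ip_simple_root_last rho_def)

definition signed_swap :: "nat \<Rightarrow> nat \<Rightarrow> real \<Rightarrow> (nat \<Rightarrow> real) \<Rightarrow> nat \<Rightarrow> real" where
  "signed_swap k l c z = (\<lambda>t. (if t = k \<or> t = l then c else 1) * z (transpose k l t))"

lemma refl_root_eq_signed_swap:
  assumes "1 \<le> k" "k < l" "l \<le> n" "s \<in> {1,-1}" "r \<in> {1,-1}"
  shows "refl n (\<lambda>t. s * ev k t + r * ev l t) = signed_swap k l (- s * r)"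
proof -
  let ?a = "\<lambda>t. s * ev k t + r * ev l t"
  have coroot: "coroot n ?a = ?a"
    using assms by (intro coroot_root root_in_rootsD)
  have "s * s = 1" "r * r = 1"
    using assms(4,5) by auto
  then show ?thesis
    unfolding refl_def coroot ip_root[OF assms(1-3)] signed_swap_def fun_eq_iff
    using assms(2) by (auto simp: ev_def algebra_simps)
qed

lemma rootsD_reflE:
  assumes "a \<in> rootsD n"
  obtains k l c where "1 \<le> k" "k < l" "l \<le> n" "\<bar>c\<bar> = 1" "refl n a = signed_swap k l c"
proof -
  obtain k l s r where a: "a = (\<lambda>t. s * ev k t + r * ev l t)" "1 \<le> k" "k < l" "l \<le> n"
    "s \<in> {1,-1}" "r \<in> {1,-1}"
    using assms unfolding rootsD_def by blast
  have "\<bar>- s * r\<bar> = 1"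
    using a(5,6) by auto
  then show ?thesis
    using that refl_root_eq_signed_swap[OF a(2-6)] a(1-4) by blast
qed

lemma weylD_invariant:
  assumes "w \<in> weylD n"
    and "\<And>k l c z. 1 \<le> k \<Longrightarrow> k < l \<Longrightarrow> l \<le> n \<Longrightarrow> \<bar>c\<bar> = 1 \<Longrightarrow> f (signed_swap k l c z) = f z"
  shows "f (w z) = f z"
  using assms(1)
proof induction
  case weyl_id
  then show ?case by simp
next
  case (weyl_step w a)
  then obtain k l c where "1 \<le> k" "k < l" "l \<le> n" "\<bar>c\<bar> = 1" "refl n a = signed_swap k l c"
    by (blast elim: rootsD_reflE)
  then show ?case
    using weyl_step.IH assms(2) by simp
qed

definition abs_coords :: "nat \<Rightarrow> (nat \<Rightarrow> real) \<Rightarrow> real multiset" where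
  "abs_coords n z = image_mset (\<lambda>t. \<bar>z t\<bar>) (mset_set {1..n})"

lemma abs_coords_signed_swap:
  assumes "1 \<le> k" "k < l" "l \<le> n" "\<bar>c\<bar> = 1"
  shows "abs_coords n (signed_swap k l c z) = abs_coords n z"
proof -
  have "\<bar>if t = k \<or> t = l then c else 1\<bar> = 1" for t
    using assms(4) by simp
  then have "abs_coords n (signed_swap k l c z)
      = image_mset (\<lambda>t. \<bar>z t\<bar>) (image_mset (transpose k l) (mset_set {1..n}))"
    unfolding abs_coords_def signed_swap_def by (simp add: abs_mult multiset.map_comp comp_def)
  also have "image_mset (transpose k l) (mset_set {1..n}) = mset_set {1..n}"
    using assms by (simp add: image_mset_mset_set)
  finally show ?thesis
    unfolding abs_coords_def .
qed

lemma prod_signed_swap: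
  assumes "1 \<le> k" "k < l" "l \<le> n" "\<bar>c\<bar> = 1"
  shows "prod (signed_swap k l c z) {1..n} = prod z {1..n}"
proof -
  have kl: "k \<in> {1..n}" "l \<in> {1..n}" "k \<noteq> l"
    using assms by auto
  have "{1..n} \<inter> {t. t = k \<or> t = l} = {k, l}"
    using kl by auto
  then have "prod (\<lambda>t. if t = k \<or> t = l then c else 1) {1..n} = c\<^sup>2"
    using kl by (simp add: prod.If_cases power2_eq_square)
  also have "\<dots> = 1"
    using assms(4) by (metis power2_abs power_one)
  finally have signs: "prod (\<lambda>t. if t = k \<or> t = l then c else 1) {1..n} = 1" .
  have "prod (\<lambda>t. z (transpose k l t)) {1..n} = prod z {1..n}"
    by (rule prod.reindex_bij_betw) (use kl in simp)
  then show ?thesis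
    unfolding signed_swap_def prod.distrib signs by simp
qed

lemma weylD_fixes_outside:
  assumes "w \<in> weylD n" "t \<notin> {1..n}"
  shows "w z t = z t"
  using assms(1)
  by (rule weylD_invariant[where f = "\<lambda>z. z t"]) (use assms(2) in \<open>auto simp: signed_swap_def\<close>)

lemma weylD_abs_coords: "w \<in> weylD n \<Longrightarrow> abs_coords n (w z) = abs_coords n z"
  by (erule weylD_invariant) (rule abs_coords_signed_swap)

lemma weylD_prod: "w \<in> weylD n \<Longrightarrow> prod (w z) {1..n} = prod z {1..n}"
  by (erule weylD_invariant) (rule prod_signed_swap)

lemma abs_coords_eqE:
  assumes "abs_coords n y = abs_coords n z" "t \<in> {1..n}"
  obtains s where "s \<in> {1..n}" "\<bar>y t\<bar> = \<bar>z s\<bar>"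
proof -
  have "\<bar>y t\<bar> \<in># abs_coords n y"
    using assms(2) by (simp add: abs_coords_def)
  then have "\<bar>y t\<bar> \<in># abs_coords n z"
    using assms(1) by simp
  then show ?thesis
    using that by (auto simp: abs_coords_def)
qed

lemma count_abs_coords: "count (abs_coords n z) v = card {k\<in>{1..n}. \<bar>z k\<bar> = v}"
proof -
  have "{k\<in>{1..n}. \<bar>z k\<bar> = v} = (\<lambda>k. \<bar>z k\<bar>) -` {v} \<inter> {1..n}"
    by auto
  then show ?thesis
    by (simp add: abs_coords_def count_image_mset)
qed

lemma abs_coords_eq_mset: "abs_coords n z = mset (map (\<lambda>k. \<bar>z k\<bar>) [1..<Suc n])"
  by (simp del: upt_Suc add: abs_coords_def atLeastLessThanSuc_atLeastAtMost)

lemma abs_coords_eq_pattern: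
  assumes "length L = n" "\<forall>k\<in>{1..n}. x k = c * L ! (k - 1)"
  shows "abs_coords n x = mset (map (\<lambda>a. \<bar>c * a\<bar>) L)"
proof -
  have "map (\<lambda>k. \<bar>x k\<bar>) [1..<Suc n] = map (\<lambda>a. \<bar>c * a\<bar>) L"
    using assms by (auto simp del: upt_Suc intro!: nth_equalityI)
  then show ?thesis
    by (simp only: abs_coords_eq_mset)
qed

abbreviation weyl_orbit :: "nat \<Rightarrow> (nat \<Rightarrow> real) \<Rightarrow> (nat \<Rightarrow> real) set" where
  "weyl_orbit n x \<equiv> (\<lambda>w. w x) ` weylD n"

lemma finite_funs_fixed_outside:
  assumes "finite A" "finite V"
  shows "finite {z. (\<forall>t\<in>A. z t \<in> V) \<and> (\<forall>t. t \<notin> A \<longrightarrow> z t = x t)}"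
proof -
  let ?F = "{f. \<forall>t. (t \<in> A \<longrightarrow> f t \<in> V) \<and> (t \<notin> A \<longrightarrow> f t = undefined)}"
  have "{z. (\<forall>t\<in>A. z t \<in> V) \<and> (\<forall>t. t \<notin> A \<longrightarrow> z t = x t)}
      \<subseteq> (\<lambda>f t. if t \<in> A then f t else x t) ` ?F"
  proof
    fix z assume "z \<in> {z. (\<forall>t\<in>A. z t \<in> V) \<and> (\<forall>t. t \<notin> A \<longrightarrow> z t = x t)}"
    then show "z \<in> (\<lambda>f t. if t \<in> A then f t else x t) ` ?F"
      by (intro image_eqI[where x = "\<lambda>t. if t \<in> A then z t else undefined"]) (auto simp: fun_eq_iff)
  qed
  moreover have "finite ?F"
    using assms by (rule finite_set_of_finite_funs)
  ultimately show ?thesis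
    by (meson finite_imageI finite_subset)
qed

lemma finite_weyl_orbit: "finite (weyl_orbit n x)"
proof -
  let ?V = "x ` {1..n} \<union> uminus ` x ` {1..n}"
  have "weyl_orbit n x \<subseteq> {z. (\<forall>t\<in>{1..n}. z t \<in> ?V) \<and> (\<forall>t. t \<notin> {1..n} \<longrightarrow> z t = x t)}"
  proof
    fix z assume "z \<in> weyl_orbit n x"
    then obtain w where w: "w \<in> weylD n" "z = w x"
      by blast
    have "w x t \<in> ?V" if t: "t \<in> {1..n}" for t
    proof -
      obtain s where "s \<in> {1..n}" "\<bar>w x t\<bar> = \<bar>x s\<bar>"
        using abs_coords_eqE[OF weylD_abs_coords[OF w(1)] t] .
      then show ?thesis
        by (auto simp: abs_eq_iff)
    qed
    moreover have "w x t = x t" if "t \<notin> {1..n}" for t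
      using w(1) that by (rule weylD_fixes_outside)
    ultimately show "z \<in> {z. (\<forall>t\<in>{1..n}. z t \<in> ?V) \<and> (\<forall>t. t \<notin> {1..n} \<longrightarrow> z t = x t)}"
      using w(2) by blast
  qed
  then show ?thesis
    by (rule finite_subset) (rule finite_funs_fixed_outside; simp)
qed

text \<open>\<open>\<rho> = (n - 1, \<dots>, 1, 0)\<close> pairs to 1 with every simple root, so the reflection in
  \<open>\<alpha>\<^sub>k\<close> lowers \<open>\<langle>y, \<rho>\<rangle>\<close> by \<open>\<langle>y, \<alpha>\<^sub>k\<rangle>\<close>.\<close>
lemma dominant_in_weyl_orbit:
  assumes "n \<ge> 2"
  obtains y where "y \<in> weyl_orbit n x" "dominant n y"
proof -
  let ?S = "weyl_orbit n x" and ?h = "\<lambda>z. ip n z (rho n)"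
  have fin: "finite (?h ` ?S)"
    by (rule finite_imageI[OF finite_weyl_orbit])
  have "?h ` ?S \<noteq> {}"
    using weylD.weyl_id by blast
  then obtain y where ymax: "Max (?h ` ?S) = ?h y" and y: "y \<in> ?S"
    using Max_in[OF fin] by (meson imageE)
  have max: "?h z \<le> ?h y" if "z \<in> ?S" for z
    unfolding ymax[symmetric] by (rule Max_ge[OF fin]) (use that in blast)
  obtain w where w: "w \<in> weylD n" "y = w x"
    using y by blast
  have "ip n y (simple_root n k) \<ge> 0" if k: "k \<in> {1..n}" for k
  proof -
    have "refl n (simple_root n k) \<circ> w \<in> weylD n"
      by (rule weylD.weyl_step[OF w(1) simple_root_in_rootsD[OF assms k]])
    then have "refl n (simple_root n k) y \<in> ?S"
      unfolding w(2) by (rule rev_image_eqI) simp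
    then have "?h (refl n (simple_root n k) y) \<le> ?h y"
      by (rule max)
    then show ?thesis
      using ip_simple_root_rho[OF assms k] coroot_simple_root[OF assms k] by (simp add: ip_refl)
  qed
  then show ?thesis
    using that y unfolding dominant_def by blast
qed

lemma rel_chain_Suc:
  assumes "reflp R" "transp R"
    and step: "\<And>k. a \<le> k \<Longrightarrow> k < b \<Longrightarrow> R (f (Suc k)) (f k)"
    and "a \<le> k" "k \<le> m" "m \<le> b"
  shows "R (f m) (f k)"
  using assms(5,6)
proof (induction m rule: dec_induct)
  case base
  show ?case
    using assms(1) by (simp add: reflpD)
next
  case (step m)
  have "R (f (Suc m)) (f m)"
    using step.hyps(1) step.prems assms(4) by (intro assms(3)) auto
  moreover have "R (f m) (f k)"
    using step.IH step.prems by simp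
  ultimately show ?case
    by (rule transpD[OF assms(2)])
qed

lemma dominant_antimono:
  assumes "dominant n y" "1 \<le> k" "k < n"
  shows "y (Suc k) \<le> y k"
  using assms ip_simple_root[of k n y] unfolding dominant_def by force

lemma dominant_last:
  assumes "dominant n y" "n \<ge> 2"
  shows "0 \<le> y (n-1) + y n"
proof -
  have "n \<in> {1..n}"
    using assms(2) by simp
  then show ?thesis
    using assms ip_simple_root_last[of n y] unfolding dominant_def by fastforce
qed

lemma dominant_abs_last_le:
  assumes "dominant n y" "n \<ge> 2" "1 \<le> k" "k < n"
  shows "\<bar>y n\<bar> \<le> y k"
proof -
  have step: "y (Suc m) \<le> y m" if "1 \<le> m" "m < n - 1" for m
    using dominant_antimono[OF assms(1) that(1)] that(2) by simp
  have "y (n-1) \<le> y k"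
    by (rule rel_chain_Suc[where R = "(\<le>)" and f = y, OF _ _ step]) (use assms in auto)
  moreover have "y n \<le> y (n-1)"
    using dominant_antimono[OF assms(1), of "n-1"] assms(2) by simp
  ultimately show ?thesis
    using dominant_last[OF assms(1,2)] by linarith
qed

lemma dominant_abs_antimono:
  assumes "dominant n y" "n \<ge> 2" "1 \<le> k" "k < n"
  shows "\<bar>y (Suc k)\<bar> \<le> \<bar>y k\<bar>"
proof (cases "Suc k = n")
  case True
  then show ?thesis
    using dominant_abs_last_le[OF assms] by simp
next
  case False
  then show ?thesis
    using dominant_antimono[OF assms(1,3,4)] dominant_abs_last_le[OF assms(1,2), of "Suc k"] assms(4)
    by simp
qed

lemma antimono_eq_if_image_mset_eq:
  fixes f g :: "nat \<Rightarrow> 'a::linorder"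
  assumes "\<And>k. 1 \<le> k \<Longrightarrow> k < n \<Longrightarrow> f (Suc k) \<le> f k"
    and "\<And>k. 1 \<le> k \<Longrightarrow> k < n \<Longrightarrow> g (Suc k) \<le> g k"
    and "image_mset f (mset_set {1..n}) = image_mset g (mset_set {1..n})"
    and "k \<in> {1..n}"
  shows "f k = g k"
proof -
  have sorted: "sorted (rev (map h [1..<Suc n]))"
    if "\<And>k. 1 \<le> k \<Longrightarrow> k < n \<Longrightarrow> h (Suc k) \<le> h k" for h :: "nat \<Rightarrow> 'a"
    using that by (auto simp del: upt_Suc simp: sorted_wrt_rev sorted_wrt_iff_nth_Suc_transp)
  have mset: "mset (rev (map h [1..<Suc n])) = image_mset h (mset_set {1..n})" for h :: "nat \<Rightarrow> 'a"
    by (simp del: upt_Suc add: atLeastLessThanSuc_atLeastAtMost)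
  have "rev (map f [1..<Suc n]) = sort (rev (map g [1..<Suc n]))"
    by (intro properties_for_sort[symmetric] sorted assms(1)) (simp only: mset assms(3))
  also have "\<dots> = rev (map g [1..<Suc n])"
    using assms(2) by (intro sorted_sort_id sorted)
  finally have "map f [1..<Suc n] = map g [1..<Suc n]"
    by simp
  then show ?thesis
    using assms(4) by (simp del: upt_Suc add: map_eq_conv)
qed

text \<open>The absolute values of the coordinates of a dominant weight decrease, so they are
  determined by their multiset. This fixes every coordinate but the sign of the last one, and the
  product fixes that sign unless some coordinate vanishes, in which case the last one vanishes too.\<close>
lemma dominant_unique:
  assumes "n \<ge> 2" "dominant n y" "dominant n z"
    and "abs_coords n y = abs_coords n z" "prod y {1..n} = prod z {1..n}"
    and "\<And>t. t \<notin> {1..n} \<Longrightarrow> y t = z t"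
  shows "y = z"
proof -
  have abs_eq: "\<bar>y k\<bar> = \<bar>z k\<bar>" if "k \<in> {1..n}" for k
    using assms(4) that unfolding abs_coords_def
    by (intro antimono_eq_if_image_mset_eq[where f = "\<lambda>t. \<bar>y t\<bar>"])
       (auto intro: dominant_abs_antimono assms(1-3))
  have below: "y k = z k" if "1 \<le> k" "k < n" for k
    using abs_eq[of k] dominant_abs_last_le[OF assms(2,1) that] dominant_abs_last_le[OF assms(3,1) that]
      that by auto
  have last: "y n = z n"
  proof (rule ccontr)
    assume ne: "y n \<noteq> z n"
    have split: "prod h {1..n} = prod h {1..<n} * h n" for h :: "nat \<Rightarrow> real"
      using assms(1) by (simp flip: atLeastLessThanSuc_atLeastAtMost add: prod.atLeastLessThan_Suc)
    have "prod y {1..<n} = prod z {1..<n}"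
      using below by (intro prod.cong) auto
    then have "prod y {1..<n} = 0"
      using assms(5) ne unfolding split by simp
    then obtain k where k: "1 \<le> k" "k < n" "y k = 0"
      by auto
    then show False
      using ne dominant_abs_last_le[OF assms(2,1) k(1,2)] dominant_abs_last_le[OF assms(3,1) k(1,2)]
        below[OF k(1,2)] by simp
  qed
  show ?thesis
  proof
    fix t
    show "y t = z t"
      using assms(6)[of t] below[of t] last by (cases "t \<in> {1..n}") (auto simp: le_less)
  qed
qed

lemma ex1_dominant_in_weyl_orbit:
  assumes "n \<ge> 2"
  shows "\<exists>!y. y \<in> weyl_orbit n x \<and> dominant n y"
proof (rule ex_ex1I)
  show "\<exists>y. y \<in> weyl_orbit n x \<and> dominant n y"
    using dominant_in_weyl_orbit[OF assms] by blast
next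
  fix y z assume y: "y \<in> weyl_orbit n x \<and> dominant n y" and z: "z \<in> weyl_orbit n x \<and> dominant n z"
  then obtain v w where vw: "v \<in> weylD n" "y = v x" "w \<in> weylD n" "z = w x"
    by blast
  show "y = z"
    using assms y z vw weylD_prod[OF vw(1), of x] weylD_prod[OF vw(3), of x]
    by (intro dominant_unique) (auto simp: weylD_abs_coords weylD_fixes_outside)
qed

lemma dom_conj_in_weyl_orbit: "n \<ge> 2 \<Longrightarrow> dom_conj n x \<in> weyl_orbit n x"
  using theI'[OF ex1_dominant_in_weyl_orbit] unfolding dom_conj_def by blast

lemma dominant_dom_conj: "n \<ge> 2 \<Longrightarrow> dominant n (dom_conj n x)"
  using theI'[OF ex1_dominant_in_weyl_orbit] unfolding dom_conj_def by blast

lemma dominant_shape: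
  assumes n: "n \<ge> 2" and dom: "dominant n y" and j: "j \<in> {1..n}"
    and zeros: "{k\<in>{1..n}. ip n y (simple_root n k) = 0} = {1..n} - {j}"
  shows "0 < y 1"
    and "j \<le> n - 2 \<Longrightarrow> k \<in> {1..n} \<Longrightarrow> y k = (if k \<le> j then y 1 else 0)"
    and "n - 1 \<le> j \<Longrightarrow> k \<in> {1..n} \<Longrightarrow> \<bar>y k\<bar> = y 1"
proof -
  have zero_iff: "ip n y (simple_root n k) = 0 \<longleftrightarrow> k \<noteq> j" if "k \<in> {1..n}" for k
    using zeros that by blast
  have wall: "y (Suc k) = y k \<longleftrightarrow> k \<noteq> j" if "1 \<le> k" "k < n" for k
    using zero_iff[of k] that ip_simple_root[OF that, of y] by auto
  have wall_last: "y (n-1) + y n = 0 \<longleftrightarrow> j \<noteq> n"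
    using zero_iff[of n] n ip_simple_root_last[OF n, of y] by auto
  have chain: "y m = y k" if "a \<le> k" "k \<le> m" "m \<le> b" "1 \<le> a" "b \<le> n" "j \<notin> {a..<b}" for a b k m
  proof (rule rel_chain_Suc[where R = "(=)" and f = y and a = a and b = b])
    fix i assume "a \<le> i" "i < b"
    then show "y (Suc i) = y i"
      using wall[of i] that by auto
  qed (use that in auto)
  have up_to_j: "y k = y 1" if "1 \<le> k" "k \<le> j" for k
    using j that by (intro chain[where a = 1 and b = j]) auto
  have after_j: "y k = y n" if "j < k" "k \<le> n" for k
    using that by (intro chain[where a = k and b = n, symmetric]) auto
  have "0 < y 1 \<and> (j \<le> n - 2 \<longrightarrow> y n = 0) \<and> (n - 1 \<le> j \<longrightarrow> \<bar>y n\<bar> = y 1)"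
  proof (cases "j \<le> n - 2")
    case True
    have "y n = y (n-1)"
      using wall[of "n-1"] True n by simp
    then have "y n = 0"
      using wall_last True n by simp
    moreover have "y (Suc j) \<noteq> y j" "y (Suc j) \<le> y j" "y (Suc j) = y n"
      using wall[of j] dominant_antimono[OF dom, of j] after_j[of "Suc j"] j True n by auto
    ultimately show ?thesis
      using up_to_j[of j] j True by auto
  next
    case False
    then consider "j = n - 1" | "j = n"
      using j by fastforce
    then show ?thesis
    proof cases
      case 1
      then have "y n = - y (n-1)" "y n \<noteq> y (n-1)" "y n \<le> y (n-1)"
        using wall_last wall[of "n-1"] dominant_antimono[OF dom, of "n-1"] n by auto
      then show ?thesis
        using up_to_j[of "n-1"] 1 n by auto
    next
      case 2
      then have "y (n-1) + y n \<noteq> 0" "y n = y 1" "y (n-1) = y 1"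
        using wall_last up_to_j[of n] up_to_j[of "n-1"] n by auto
      then show ?thesis
        using dominant_last[OF dom n] 2 n by auto
    qed
  qed
  then have pos: "0 < y 1" and low: "j \<le> n - 2 \<Longrightarrow> y n = 0"
    and high: "n - 1 \<le> j \<Longrightarrow> \<bar>y n\<bar> = y 1"
    by blast+
  show "0 < y 1"
    by (fact pos)
  show "y k = (if k \<le> j then y 1 else 0)" if "j \<le> n - 2" "k \<in> {1..n}"
    using up_to_j[of k] after_j[of k] low that by auto
  show "\<bar>y k\<bar> = y 1" if "n - 1 \<le> j" "k \<in> {1..n}"
    using up_to_j[of k] after_j[of k] high pos that by (cases "k \<le> j") auto
qed

lemma basic_weight_simple_root:
  assumes "basic_weight n i j x" "n \<ge> 2" "k \<in> {1..n}" "k \<noteq> i"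
  shows "ip n x (simple_root n k) \<in> \<int>" and "0 < ip n x (simple_root n k)"
proof -
  have "ip n x (coroot n (simple_root n k)) \<in> \<int> \<and> 0 < ip n x (coroot n (simple_root n k))"
    using assms(1,3,4) unfolding basic_weight_def by blast
  then show "ip n x (simple_root n k) \<in> \<int>" and "0 < ip n x (simple_root n k)"
    using coroot_simple_root[OF assms(2,3)] by simp_all
qed

lemma basic_weight_descent:
  assumes "basic_weight n i j x" "n \<ge> 2" "1 \<le> k" "k < n" "k \<noteq> i"
  shows "x (Suc k) < x k" and "x k - x (Suc k) \<in> \<int>"
  using basic_weight_simple_root[OF assms(1,2), of k] assms(3-5) ip_simple_root[OF assms(3,4), of x]
  by auto

lemma basic_weight_last:
  assumes "basic_weight n i j x" "n \<ge> 2" "i \<noteq> n"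
  shows "0 < x (n-1) + x n"
  using basic_weight_simple_root(2)[OF assms(1,2), of n] assms(2,3)
    ip_simple_root_last[OF assms(2), of x] by auto

lemma basic_weight_coords:
  assumes bw: "basic_weight n i j x" and n: "n \<ge> 2" and j: "j \<in> {1..n}"
  obtains c where "0 < c" and "\<And>k. k \<in> {1..n} \<Longrightarrow> x k \<in> {0, c, -c}"
    and "\<And>m. m \<in> {1..n} \<Longrightarrow> x m = 0 \<Longrightarrow> j \<le> n - 2 \<and> count (abs_coords n x) c = j"
proof -
  define y where "y = dom_conj n x"
  have dom: "dominant n y"
    unfolding y_def by (rule dominant_dom_conj[OF n])
  obtain w where "w \<in> weylD n" "y = w x"
    using dom_conj_in_weyl_orbit[OF n] unfolding y_def by blast
  then have abs_eq: "abs_coords n y = abs_coords n x"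
    by (simp add: weylD_abs_coords)
  have "{k\<in>{1..n}. ip n y (simple_root n k) = 0} = {1..n} - {j}"
    using bw unfolding basic_weight_def y_def by blast
  note shape = dominant_shape[OF n dom j this]
  have y_vals: "\<bar>y k\<bar> = y 1 \<or> y k = 0" if "k \<in> {1..n}" for k
    using shape(1) shape(2,3)[OF _ that] by (cases "j \<le> n - 2") auto
  have "x k \<in> {0, y 1, - y 1}" if k: "k \<in> {1..n}" for k
  proof -
    obtain s where "s \<in> {1..n}" "\<bar>x k\<bar> = \<bar>y s\<bar>"
      using abs_coords_eqE[OF abs_eq[symmetric] k] .
    then show ?thesis
      using y_vals[of s] by (auto simp: abs_eq_iff)
  qed
  moreover have "j \<le> n - 2 \<and> count (abs_coords n x) (y 1) = j" if m: "m \<in> {1..n}" "x m = 0" for m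
  proof -
    obtain s where s: "s \<in> {1..n}" "\<bar>x m\<bar> = \<bar>y s\<bar>"
      using abs_coords_eqE[OF abs_eq[symmetric] m(1)] .
    then have "y s = 0"
      using m(2) by simp
    have low: "j \<le> n - 2"
      using shape(1) shape(3)[OF _ s(1)] \<open>y s = 0\<close> by fastforce
    have "{k\<in>{1..n}. \<bar>y k\<bar> = y 1} = {1..j}"
    proof (intro set_eqI iffI)
      fix k assume "k \<in> {k\<in>{1..n}. \<bar>y k\<bar> = y 1}"
      then show "k \<in> {1..j}"
        using shape(1) shape(2)[OF low, of k] by (auto split: if_splits)
    next
      fix k assume "k \<in> {1..j}"
      then show "k \<in> {k\<in>{1..n}. \<bar>y k\<bar> = y 1}"
        using shape(1) shape(2)[OF low, of k] j by auto
    qed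
    then show ?thesis
      using low abs_eq count_abs_coords[of n y "y 1"] by simp
  qed
  ultimately show ?thesis
    using that shape(1) by blast
qed

lemma descents_in_three_values:
  fixes x :: "nat \<Rightarrow> real"
  assumes c: "0 < c" and n: "4 \<le> n"
    and vals: "\<And>k. k \<in> {1..n} \<Longrightarrow> x k \<in> {0, c, -c}"
    and desc: "\<And>k. 1 \<le> k \<Longrightarrow> k < n \<Longrightarrow> k \<noteq> i \<Longrightarrow> x (Suc k) < x k"
    and last_pos: "i \<noteq> n \<Longrightarrow> 0 < x (n-1) + x n"
  obtains L where "\<forall>k\<in>{1..n}. x k = c * L ! (k - 1)"
    and "n = 4 \<and> i = 2 \<and> L \<in> {[1, 0, 1, 0], [0, -1, 1, 0], [1, -1, 1, 0]}
       \<or> n = 5 \<and> i = 3 \<and> L = [1, 0, -1, 1, 0]"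
proof -
  have gap: "c \<le> x k - x (Suc k)" if "1 \<le> k" "k < n" "k \<noteq> i" for k
    using desc[OF that] vals[of k] vals[of "Suc k"] that c by auto
  have bound: "\<bar>x k\<bar> \<le> c" if "k \<in> {1..n}" for k
    using vals[OF that] c by auto
  have no_three_gaps: False if "1 \<le> m" "m + 3 \<le> n" "i \<notin> {m, m+1, m+2}" for m
    using gap[of m] gap[of "m+1"] gap[of "m+2"] bound[of m] bound[of "m+3"] that c
    by (simp add: numeral_eq_Suc abs_le_iff)
  have "i \<le> 3" "n - 3 \<le> i"
    using no_three_gaps[of 1] no_three_gaps[of "n-3"] n by force+
  then have "i \<noteq> n"
    using n by simp
  then have sum: "0 < x (n-1) + x n"
    by (rule last_pos)
  have "i \<noteq> n - 1"
  proof
    assume "i = n - 1"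
    then have "n = 4" "i = 3"
      using \<open>i \<le> 3\<close> n by auto
    then show False
      using gap[of 1] gap[of 2] bound[of 1] bound[of 3] bound[of 4] sum c
      by (simp add: abs_le_iff eval_nat_numeral)
  qed
  then have "c \<le> x (n-1) - x n"
    using gap[of "n-1"] n by simp
  then have x_last: "x (n-1) = c" "x n = 0"
    using vals[of "n-1"] vals[of n] sum c n by auto
  have "i = n - 2"
  proof (rule ccontr)
    assume "i \<noteq> n - 2"
    moreover have "Suc (n-2) = n - 1" "1 \<le> n - 2" "n - 2 < n"
      using n by auto
    ultimately have "c \<le> x (n-2) - x (n-1)"
      using gap[of "n-2"] by simp
    moreover have "\<bar>x (n-2)\<bar> \<le> c"
      using bound n by simp
    ultimately show False
      using x_last c by simp
  qed
  then consider "n = 4" "i = 2" | "n = 5" "i = 3"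
    using \<open>i \<le> 3\<close> n by force
  then show ?thesis
  proof cases
    case 1
    then have "{1..n} = {1, 2, 3, 4}"
      by auto
    moreover consider "x 1 = c" "x 2 = 0" | "x 1 = 0" "x 2 = -c" | "x 1 = c" "x 2 = -c"
      using gap[of 1] vals[of 1] vals[of 2] c 1 by (auto simp: eval_nat_numeral)
    ultimately show ?thesis
      using that[of "[1, 0, 1, 0]"] that[of "[0, -1, 1, 0]"] that[of "[1, -1, 1, 0]"] x_last 1
      by cases auto
  next
    case 2
    then have "{1..n} = {1, 2, 3, 4, 5}"
      by auto
    moreover have "x 1 = c" "x 2 = 0" "x 3 = -c"
      using gap[of 1] gap[of 2] vals[of 1] vals[of 2] vals[of 3] c 2 by (auto simp: eval_nat_numeral)
    ultimately show ?thesis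
      using that[of "[1, 0, -1, 1, 0]"] x_last 2 by auto
  qed
qed

theorem theorem5p10:
  fixes n i j :: nat and x :: "nat \<Rightarrow> real"
  assumes "n \<ge> 4" and "i \<in> {1..n}" and "j \<in> {1..n}"
    and "basic_system n i j"
    and "basic_weight n i j x"
  shows "\<exists>m::nat. m > 0 \<and>
    ((n = 4 \<and> i = 2 \<and> j = 2 \<and>
       ((\<forall>k\<in>{1..n}. x k = real m * [1, 0, 1, 0] ! (k - 1)) \<or>
        (\<forall>k\<in>{1..n}. x k = real m * [0, -1, 1, 0] ! (k - 1))))
    \<or> (n = 5 \<and> i = 3 \<and> j = 3 \<and>
       (\<forall>k\<in>{1..n}. x k = real m * [1, 0, -1, 1, 0] ! (k - 1))))"
proof -
  have n: "n \<ge> 2"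
    using assms(1) by simp
  obtain c where c: "0 < c" and vals: "\<And>k. k \<in> {1..n} \<Longrightarrow> x k \<in> {0, c, -c}"
    and zero: "\<And>m. m \<in> {1..n} \<Longrightarrow> x m = 0 \<Longrightarrow> j \<le> n - 2 \<and> count (abs_coords n x) c = j"
    using basic_weight_coords[OF assms(5) n assms(3)] by blast
  obtain L where x: "\<forall>k\<in>{1..n}. x k = c * L ! (k - 1)"
    and L: "n = 4 \<and> i = 2 \<and> L \<in> {[1, 0, 1, 0], [0, -1, 1, 0], [1, -1, 1, 0]}
       \<or> n = 5 \<and> i = 3 \<and> L = [1, 0, -1, 1, 0]"
    using descents_in_three_values[OF c assms(1) vals basic_weight_descent(1)[OF assms(5) n]
        basic_weight_last[OF assms(5) n]] by blast
  have "length L = n" "x (n - 1) - x (Suc (n - 1)) = c" "x n = 0" "n - 1 \<noteq> i"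
    using L x[rule_format, of "n - 1"] x[rule_format, of n] by auto
  then have "c \<in> \<int>" and "count (mset (map (\<lambda>a. \<bar>c * a\<bar>) L)) c = j" and "j \<le> n - 2"
    using basic_weight_descent(2)[OF assms(5) n, of "n - 1"] zero[of n] abs_coords_eq_pattern[OF _ x]
      assms(1) by auto
  then have j: "n = 4 \<and> i = 2 \<and> j = 2 \<and> L \<in> {[1, 0, 1, 0], [0, -1, 1, 0]}
      \<or> n = 5 \<and> i = 3 \<and> j = 3 \<and> L = [1, 0, -1, 1, 0]"
    using L c by auto
  have "c \<in> \<nat>"
    using \<open>c \<in> \<int>\<close> c by (simp add: Nats_altdef2)
  then obtain m :: nat where "c = real m"
    by (elim Nats_cases)
  then have "0 < m" "\<forall>k\<in>{1..n}. x k = real m * L ! (k - 1)"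
    using c x by simp_all
  then show ?thesis
    using j by (intro exI[of _ m]) blast
qed

end
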